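(* Consider the two-armed improving bandit instance on the horizon $[0,T]$ with arms $f_1(t)=1$ for all $t$, and $f_2(t)=0$ for $t<\theta$, $f_2(t)=\alpha(t-\theta)$ for $t\ge\theta$, where $\theta$ is unknown. Suppose an agent is $\tilde\alpha$-gritty, i.e. guesses that the slope of the increasing portion of $f_2$ is $\tilde\alpha>0$, and that the agent's goal is to maximize the competitive ratio. Then the agent plays $f_2$ for $T-\sqrt{2T/\tilde\alpha}$ units of time, after which it switches to $f_1$ permanently.
   Context: Time is continuous. The argument $t$ of each arm's reward function is the amount of time that arm has been played so far. The reward from an arm is the integral of its reward function over the time spent on it. A strategy achieves competitive ratio $g$ if $\mathrm{ALG}/\mathrm{OPT}\ge g$, where $\mathrm{ALG}$ is the strategy's total reward and $\mathrm{OPT}$ is the optimal achievable total reward in hindsight. The agent considers only strategies that play $f_2$ for some time $s$ and then switch permanently to $f_1$. It chooses the switch point $s$ to maximize its worst-case competitive ratio, computed with its guessed slope $\tilde\alpha$. This worst case is over the unknown $\theta$. There are two extreme cases. If $f_2$ never increases, the ratio is $\frac{T-s}{T}$, which decreases in $s$. If $f_2$ begins increasing right after the switch, the ratio is $\frac{T-s}{\frac{\tilde\alpha}{2}(T-s)^2}$, which increases in $s$. The competitive-ratio-maximizing agent chooses the $s$ at which these two quantities are equal. *)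

theory Defs
  imports Complex_Main
begin

text \<open>Competitive ratio when playing f2 for time s then f1 until T, in the two extreme
  cases of the context (guessed slope a): f2 never increases, and f2 starts
  increasing (with slope a) right after the switch.\<close>

definition ratio_never :: "real \<Rightarrow> real \<Rightarrow> real" where
  "ratio_never T s = (T - s) / T"

definition ratio_after :: "real \<Rightarrow> real \<Rightarrow> real \<Rightarrow> real" where
  "ratio_after a T s = (T - s) / ((a / 2) * (T - s)^2)"

definition worst_ratio :: "real \<Rightarrow> real \<Rightarrow> real \<Rightarrow> real" where
  "worst_ratio a T s = min (ratio_never T s) (ratio_after a T s)"

end

theory Submission
  imports Defs
begin

text \<open>As the switch point s moves right, the ratio (T - s)/T of the case where f2 never
  increases strictly falls, while the ratio 2/(a (T - s)) of the case where f2 starts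
  increasing right after the switch strictly rises on [0, T). Hence their minimum is
  uniquely maximised where the two cross, i.e. where (T - s)^2 = 2T/a. At s = T the second
  ratio is the junk value 0/0 = 0, but there the first ratio already lies below the optimum.\<close>

lemma min_lt_min_at_crossing:
  fixes f g :: "'a::linorder \<Rightarrow> 'b::linorder"
  assumes "f x\<^sub>0 = g x\<^sub>0" and "x \<noteq> x\<^sub>0"
    and "x < x\<^sub>0 \<Longrightarrow> g x < g x\<^sub>0" and "x\<^sub>0 < x \<Longrightarrow> f x < f x\<^sub>0"
  shows "min (f x) (g x) < min (f x\<^sub>0) (g x\<^sub>0)"
  using assms by (cases x x\<^sub>0 rule: linorder_cases) (auto simp: min_less_iff_disj)

lemma ratio_never_strict_antimono:
  assumes "T > 0" and "s\<^sub>0 < s"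
  shows "ratio_never T s < ratio_never T s\<^sub>0"
  unfolding ratio_never_def using assms by (simp add: divide_strict_right_mono)

lemma ratio_after_eq:
  assumes "s < T" and "a \<noteq> 0"
  shows "ratio_after a T s = 2 / (a * (T - s))"
proof -
  have "d / ((a / 2) * d\<^sup>2) = 2 / (a * d)" if "d \<noteq> 0" for d :: real
    using that assms(2) by (simp add: power2_eq_square field_simps)
  from this[of "T - s"] show ?thesis unfolding ratio_after_def using assms(1) by simp
qed

lemma ratio_after_strict_mono:
  assumes "a > 0" and "s < s\<^sub>0" and "s\<^sub>0 < T"
  shows "ratio_after a T s < ratio_after a T s\<^sub>0"
proof -
  have "a * (T - s\<^sub>0) < a * (T - s)" using assms by simp
  then have "2 / (a * (T - s)) < 2 / (a * (T - s\<^sub>0))"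
    using assms by (intro divide_strict_left_mono) auto
  then show ?thesis using assms by (simp add: ratio_after_eq)
qed

lemma ratios_cross_at_switch_point:
  assumes "T > 0" and "a > 0"
  shows "ratio_never T (T - sqrt (2 * T / a)) = ratio_after a T (T - sqrt (2 * T / a))"
proof -
  define r where "r = sqrt (2 * T / a)"
  have "r > 0" and "r\<^sup>2 = 2 * T / a" using assms by (simp_all add: r_def)
  then have "r / T = 2 / (a * r)" using assms by (simp add: field_simps power2_eq_square)
  then show ?thesis
    using \<open>r > 0\<close> assms by (simp add: ratio_never_def ratio_after_eq flip: r_def)
qed

lemma switch_point_in_horizon:
  assumes "T > 0" and "a > 0" and "2 \<le> a * T"
  shows "T - sqrt (2 * T / a) \<in> {0..<T}"
proof -
  have "2 * T / a \<le> T\<^sup>2" using assms by (simp add: field_simps power2_eq_square)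
  then have "sqrt (2 * T / a) \<le> T" using assms by (simp add: real_le_lsqrt)
  moreover have "sqrt (2 * T / a) > 0" using assms by simp
  ultimately show ?thesis by simp
qed

theorem lemma2:
  fixes T a :: real
  assumes "T > 0" and "a > 0" and "2 \<le> a * T"
  defines "s\<^sub>0 \<equiv> T - sqrt (2 * T / a)"
  shows "s\<^sub>0 \<in> {0..<T}
    \<and> ratio_never T s\<^sub>0 = ratio_after a T s\<^sub>0
    \<and> (\<forall>s\<in>{0..T}. s \<noteq> s\<^sub>0 \<longrightarrow> worst_ratio a T s < worst_ratio a T s\<^sub>0)"
proof (intro conjI ballI impI)
  show s\<^sub>0_range: "s\<^sub>0 \<in> {0..<T}"
    using switch_point_in_horizon[OF assms(1-3)] by (simp add: s\<^sub>0_def)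
  show cross: "ratio_never T s\<^sub>0 = ratio_after a T s\<^sub>0"
    using ratios_cross_at_switch_point[OF assms(1,2)] by (simp add: s\<^sub>0_def)
  fix s assume "s \<in> {0..T}" and "s \<noteq> s\<^sub>0"
  then show "worst_ratio a T s < worst_ratio a T s\<^sub>0"
    unfolding worst_ratio_def
    using s\<^sub>0_range assms(1,2)
    by (intro min_lt_min_at_crossing cross ratio_never_strict_antimono ratio_after_strict_mono)
      auto
qed

end
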